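(* Under the DS scheme described in the context, suppose every driver $d$ and rider $r$ reports $b_d=\bar b_d+\varepsilon_d$ and $\delta_r=\bar\delta_r+\varepsilon_r$, with arbitrary $\varepsilon_d,\varepsilon_r\in\mathbb{R}$. Then the total utility $\sum_{d\in\mathcal{D}^*}u_d+\sum_{r\in\mathcal{R}^*}u_r$ of the matched participants is a constant, equal to the total social welfare $\bar V$ obtained without any mis-reporting.
   Context: One decision epoch with finite sets $\mathcal{D}$ (drivers) and $\mathcal{R}$ (riders). Rider $r$ requests a trip of shortest-route length $h_r$ with destination $t_r$; $\tau_{dr}\ge0$ is the pick-up distance from driver $d$ to rider $r$, $\tau_d^{\min}=\min_{r}\tau_{dr}$, $\tau_r^{\min}=\min_d\tau_{dr}$. Public constants $\alpha,\beta>0$; $f(t_r)$ is a given opportunity cost. Driver $d$ has a private true bid $\bar b_d$ and rider $r$ a private true bid $\bar\delta_r$. For a potential match $(d,r)$ and bids $b,\delta$ the valuations are $P_d(b)=\alpha h_r+b(\tau_{dr}-\tau_d^{\min})+f(t_r)$ and $P_r(\delta)=\beta h_r-\delta(\tau_{dr}-\tau_r^{\min})$; the social welfare from reported bids is $\sigma_{dr}=P_r(\delta_r)-P_d(b_d)$ and from true bids $\bar\sigma_{dr}=P_r(\bar\delta_r)-P_d(\bar b_d)$. Each potential match has a sensing gain $\zeta_{dr}\ge0$ not depending on bids. DS matching problem: maximize $\sum_{r,d}\zeta_{dr}x_{dr}$ subject to $\sum_r x_{dr}\le1$ $\forall d$, $\sum_d x_{dr}\le 1$ $\forall r$, $\sum_{r,d}\sigma_{dr}x_{dr}\ge0$,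 $x_{dr}\in\{0,1\}$; let $x^*$ be the resulting matching with value $U^*$, $\mathcal{D}^*,\mathcal{R}^*$ the matched drivers and riders, $V=\sum_{r,d}\sigma_{dr}x^*_{dr}$ (reported) and $\bar V=\sum_{r,d}\bar\sigma_{dr}x^*_{dr}$ (true). For $d\in\mathcal{D}^*$, $\Delta U_d=U^*-U^*_{d-}$ where $U^*_{d-}$ is the optimal value with $d$ removed; analogously $\Delta U_r$. Shares $\lambda_d=\Delta U_d/(\sum_{d'\in\mathcal{D}^*}\Delta U_{d'}+\sum_{r'\in\mathcal{R}^*}\Delta U_{r'})$, $\lambda_r$ analogously (these shares sum to one); bonuses $\rho_d=V\lambda_d$, $\rho_r=V\lambda_r$; a matched driver is paid $q_d=P_d(b_d)+\rho_d$ and a matched rider charged $q_r=P_r(\delta_r)-\rho_r$. Utilities are measured with true valuations: $u_d=q_d-P_d(\bar b_d)$, $u_r=P_r(\bar\delta_r)-q_r$. *)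

theory Defs
  imports Complex_Main
begin

definition Pd :: "real \<Rightarrow> ('r \<Rightarrow> real) \<Rightarrow> ('r \<Rightarrow> 'l) \<Rightarrow> ('l \<Rightarrow> real)
    \<Rightarrow> ('d \<Rightarrow> 'r \<Rightarrow> real) \<Rightarrow> 'r set \<Rightarrow> real \<Rightarrow> 'd \<Rightarrow> 'r \<Rightarrow> real" where
  "Pd \<alpha> h t f \<tau> R b d r = \<alpha> * h r + b * (\<tau> d r - Min ((\<lambda>r'. \<tau> d r') ` R)) + f (t r)"

definition Pr :: "real \<Rightarrow> ('r \<Rightarrow> real) \<Rightarrow> ('d \<Rightarrow> 'r \<Rightarrow> real) \<Rightarrow> 'd set
    \<Rightarrow> real \<Rightarrow> 'd \<Rightarrow> 'r \<Rightarrow> real" where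
  "Pr \<beta> h \<tau> D \<delta> d r = \<beta> * h r - \<delta> * (\<tau> d r - Min ((\<lambda>d'. \<tau> d' r) ` D))"

definition sigma :: "real \<Rightarrow> real \<Rightarrow> ('r \<Rightarrow> real) \<Rightarrow> ('r \<Rightarrow> 'l) \<Rightarrow> ('l \<Rightarrow> real)
    \<Rightarrow> ('d \<Rightarrow> 'r \<Rightarrow> real) \<Rightarrow> 'd set \<Rightarrow> 'r set \<Rightarrow> ('d \<Rightarrow> real) \<Rightarrow> ('r \<Rightarrow> real)
    \<Rightarrow> 'd \<Rightarrow> 'r \<Rightarrow> real" where
  "sigma \<alpha> \<beta> h t f \<tau> D R b \<delta> d r = Pr \<beta> h \<tau> D (\<delta> r) d r - Pd \<alpha> h t f \<tau> R (b d) d r"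

definition pairsum :: "'d set \<Rightarrow> 'r set \<Rightarrow> ('d \<Rightarrow> 'r \<Rightarrow> real) \<Rightarrow> ('d \<Rightarrow> 'r \<Rightarrow> real) \<Rightarrow> real" where
  "pairsum D R w x = (\<Sum>d\<in>D. \<Sum>r\<in>R. w d r * x d r)"

definition ds_feasible :: "'d set \<Rightarrow> 'r set \<Rightarrow> ('d \<Rightarrow> 'r \<Rightarrow> real) \<Rightarrow> ('d \<Rightarrow> 'r \<Rightarrow> real) \<Rightarrow> bool" where
  "ds_feasible D R s x \<longleftrightarrow>
     (\<forall>d r. x d r \<in> {0, 1}) \<and> (\<forall>d r. x d r \<noteq> 0 \<longrightarrow> d \<in> D \<and> r \<in> R) \<and>
     (\<forall>d\<in>D. (\<Sum>r\<in>R. x d r) \<le> 1) \<and> (\<forall>r\<in>R. (\<Sum>d\<in>D. x d r) \<le> 1) \<and>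
     pairsum D R s x \<ge> 0"

definition ds_optval :: "'d set \<Rightarrow> 'r set \<Rightarrow> ('d \<Rightarrow> 'r \<Rightarrow> real) \<Rightarrow> ('d \<Rightarrow> 'r \<Rightarrow> real) \<Rightarrow> real" where
  "ds_optval D R \<zeta> s = Max (pairsum D R \<zeta> ` {x. ds_feasible D R s x})"

definition ds_optimal :: "'d set \<Rightarrow> 'r set \<Rightarrow> ('d \<Rightarrow> 'r \<Rightarrow> real) \<Rightarrow> ('d \<Rightarrow> 'r \<Rightarrow> real)
    \<Rightarrow> ('d \<Rightarrow> 'r \<Rightarrow> real) \<Rightarrow> bool" where
  "ds_optimal D R \<zeta> s x \<longleftrightarrow> ds_feasible D R s x \<and> pairsum D R \<zeta> x = ds_optval D R \<zeta> s"

text \<open>Optimal value U^* of the DS problem for the market (D,R) with reported bids b, delta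
  (the valuations, in particular tau^min, are recomputed for the given market).\<close>
definition ds_value :: "real \<Rightarrow> real \<Rightarrow> ('r \<Rightarrow> real) \<Rightarrow> ('r \<Rightarrow> 'l) \<Rightarrow> ('l \<Rightarrow> real)
    \<Rightarrow> ('d \<Rightarrow> 'r \<Rightarrow> real) \<Rightarrow> ('d \<Rightarrow> 'r \<Rightarrow> real) \<Rightarrow> ('d \<Rightarrow> real) \<Rightarrow> ('r \<Rightarrow> real)
    \<Rightarrow> 'd set \<Rightarrow> 'r set \<Rightarrow> real" where
  "ds_value \<alpha> \<beta> h t f \<tau> \<zeta> b \<delta> D R = ds_optval D R \<zeta> (sigma \<alpha> \<beta> h t f \<tau> D R b \<delta>)"

end

theory Submission
  imports Defs
begin

text \<open>A matched participant is paid (charged) its reported valuation plus (minus) its bonus,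
  so its utility is the gap between reported and true valuation plus its bonus. Summed over
  the matching, these gaps add up to \<open>Vbar - V\<close>, the true minus the reported welfare, while
  the bonuses add up to \<open>V\<close> because the shares sum to one. The misreports cancel.\<close>

lemma proportional_shares_sum:
  fixes I :: "'i set" and J :: "'j set" and a :: "'i \<Rightarrow> real" and c :: "'j \<Rightarrow> real"
    and V :: real
  defines "tot \<equiv> (\<Sum>i\<in>I. a i) + (\<Sum>j\<in>J. c j)"
  assumes "tot \<noteq> 0"
  shows "(\<Sum>i\<in>I. V * (a i / tot)) + (\<Sum>j\<in>J. V * (c j / tot)) = V"
proof -
  have "(\<Sum>i\<in>I. V * (a i / tot)) + (\<Sum>j\<in>J. V * (c j / tot))
      = V * ((\<Sum>i\<in>I. a i) / tot + (\<Sum>j\<in>J. c j) / tot)"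
    by (simp add: sum_distrib_left sum_divide_distrib distrib_left)
  also have "\<dots> = V * (tot / tot)"
    by (simp only: tot_def add_divide_distrib)
  finally show ?thesis
    using \<open>tot \<noteq> 0\<close> by simp
qed

lemma sum_matched_rows:
  fixes x g :: "'a \<Rightarrow> 'b \<Rightarrow> real"
  assumes "finite A" and x01: "\<forall>a b. x a b \<in> {0, 1}"
  shows "(\<Sum>a\<in>{a\<in>A. \<exists>b\<in>B. x a b = 1}. \<Sum>b\<in>B. x a b * g a b) = (\<Sum>a\<in>A. \<Sum>b\<in>B. x a b * g a b)"
proof (rule sum.mono_neutral_left)
  show "\<forall>a\<in>A - {a\<in>A. \<exists>b\<in>B. x a b = 1}. (\<Sum>b\<in>B. x a b * g a b) = 0"
  proof
    fix a assume "a \<in> A - {a\<in>A. \<exists>b\<in>B. x a b = 1}"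
    then have "\<forall>b\<in>B. x a b = 0"
      using x01 by blast
    then show "(\<Sum>b\<in>B. x a b * g a b) = 0"
      by simp
  qed
qed (use assms in auto)

lemma ds_optimal_zero_one:
  assumes "ds_optimal D R \<zeta> s x"
  shows "\<forall>d r. x d r \<in> {0, 1}"
  using assms unfolding ds_optimal_def ds_feasible_def by blast

lemma sigma_eq:
  "sigma \<alpha> \<beta> h t f \<tau> D R b \<delta> = (\<lambda>d r. Pr \<beta> h \<tau> D (\<delta> r) d r - Pd \<alpha> h t f \<tau> R (b d) d r)"
  by (simp add: sigma_def fun_eq_iff)

lemma total_utility_eq_true_welfare:
  fixes D :: "'d set" and R :: "'r set"
    and x pd_rep pd_true pr_rep pr_true :: "'d \<Rightarrow> 'r \<Rightarrow> real" and a :: "'d \<Rightarrow> real" and c :: "'r \<Rightarrow> real"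
  defines "Dstar \<equiv> {d\<in>D. \<exists>r\<in>R. x d r = 1}" and "Rstar \<equiv> {r\<in>R. \<exists>d\<in>D. x d r = 1}"
  defines "tot \<equiv> (\<Sum>d\<in>Dstar. a d) + (\<Sum>r\<in>Rstar. c r)"
  defines "V \<equiv> pairsum D R (\<lambda>d r. pr_rep d r - pd_rep d r) x"
  assumes "finite D" "finite R" and x01: "\<forall>d r. x d r \<in> {0, 1}" and "tot \<noteq> 0"
  shows "(\<Sum>d\<in>Dstar. ((\<Sum>r\<in>R. x d r * pd_rep d r) + V * (a d / tot)) - (\<Sum>r\<in>R. x d r * pd_true d r))
       + (\<Sum>r\<in>Rstar. (\<Sum>d\<in>D. x d r * pr_true d r) - ((\<Sum>d\<in>D. x d r * pr_rep d r) - V * (c r / tot)))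
       = pairsum D R (\<lambda>d r. pr_true d r - pd_true d r) x"
proof -
  have bonuses: "(\<Sum>d\<in>Dstar. V * (a d / tot)) + (\<Sum>r\<in>Rstar. V * (c r / tot)) = V"
    using proportional_shares_sum \<open>tot \<noteq> 0\<close> unfolding tot_def by blast
  have drivers: "(\<Sum>d\<in>Dstar. (\<Sum>r\<in>R. x d r * pd_rep d r) - (\<Sum>r\<in>R. x d r * pd_true d r))
      = (\<Sum>d\<in>D. \<Sum>r\<in>R. x d r * (pd_rep d r - pd_true d r))"
    using sum_matched_rows[OF \<open>finite D\<close> x01, where B = R and g = "\<lambda>d r. pd_rep d r - pd_true d r"]
    by (simp add: Dstar_def sum_subtractf right_diff_distrib)
  have "(\<Sum>r\<in>Rstar. (\<Sum>d\<in>D. x d r * pr_true d r) - (\<Sum>d\<in>D. x d r * pr_rep d r))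
      = (\<Sum>r\<in>R. \<Sum>d\<in>D. x d r * (pr_true d r - pr_rep d r))"
    using sum_matched_rows[OF \<open>finite R\<close>, where x = "\<lambda>r d. x d r" and B = D
        and g = "\<lambda>r d. pr_true d r - pr_rep d r"] x01
    by (simp add: Rstar_def sum_subtractf right_diff_distrib)
  also have "\<dots> = (\<Sum>d\<in>D. \<Sum>r\<in>R. x d r * (pr_true d r - pr_rep d r))"
    by (rule sum.swap)
  finally have riders: "(\<Sum>r\<in>Rstar. (\<Sum>d\<in>D. x d r * pr_true d r) - (\<Sum>d\<in>D. x d r * pr_rep d r))
      = (\<Sum>d\<in>D. \<Sum>r\<in>R. x d r * (pr_true d r - pr_rep d r))" .
  have "(\<Sum>d\<in>Dstar. ((\<Sum>r\<in>R. x d r * pd_rep d r) + V * (a d / tot)) - (\<Sum>r\<in>R. x d r * pd_true d r))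
       + (\<Sum>r\<in>Rstar. (\<Sum>d\<in>D. x d r * pr_true d r) - ((\<Sum>d\<in>D. x d r * pr_rep d r) - V * (c r / tot)))
      = (\<Sum>d\<in>Dstar. (\<Sum>r\<in>R. x d r * pd_rep d r) - (\<Sum>r\<in>R. x d r * pd_true d r))
       + (\<Sum>r\<in>Rstar. (\<Sum>d\<in>D. x d r * pr_true d r) - (\<Sum>d\<in>D. x d r * pr_rep d r))
       + ((\<Sum>d\<in>Dstar. V * (a d / tot)) + (\<Sum>r\<in>Rstar. V * (c r / tot)))"
    by (simp add: sum.distrib sum_subtractf algebra_simps)
  also have "\<dots> = (\<Sum>d\<in>D. \<Sum>r\<in>R. x d r * (pd_rep d r - pd_true d r))
       + (\<Sum>d\<in>D. \<Sum>r\<in>R. x d r * (pr_true d r - pr_rep d r)) + V"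
    using drivers riders bonuses by simp
  also have "\<dots> = pairsum D R (\<lambda>d r. pr_true d r - pd_true d r) x"
    unfolding V_def pairsum_def by (simp add: sum.distrib[symmetric] algebra_simps)
  finally show ?thesis .
qed

theorem proposition4:
  fixes D :: "'d set" and R :: "'r set"
    and h :: "'r \<Rightarrow> real" and t :: "'r \<Rightarrow> 'l" and f :: "'l \<Rightarrow> real"
    and \<tau> \<zeta> :: "'d \<Rightarrow> 'r \<Rightarrow> real" and \<alpha> \<beta> :: real
    and bbar \<epsilon>d :: "'d \<Rightarrow> real" and \<delta>bar \<epsilon>r :: "'r \<Rightarrow> real"
    and x :: "'d \<Rightarrow> 'r \<Rightarrow> real"
  assumes "finite D" and "finite R"
    and "\<alpha> > 0" and "\<beta> > 0"
    and "\<forall>d r. \<tau> d r \<ge> 0" and "\<forall>d r. \<zeta> d r \<ge> 0"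
    and opt: "ds_optimal D R \<zeta>
               (sigma \<alpha> \<beta> h t f \<tau> D R (\<lambda>d. bbar d + \<epsilon>d d) (\<lambda>r. \<delta>bar r + \<epsilon>r r)) x"
    and shares: "let b = (\<lambda>d. bbar d + \<epsilon>d d); \<delta> = (\<lambda>r. \<delta>bar r + \<epsilon>r r);
                     Ustar = ds_value \<alpha> \<beta> h t f \<tau> \<zeta> b \<delta> D R;
                     Dstar = {d\<in>D. \<exists>r\<in>R. x d r = 1}; Rstar = {r\<in>R. \<exists>d\<in>D. x d r = 1}
                 in (\<Sum>d\<in>Dstar. Ustar - ds_value \<alpha> \<beta> h t f \<tau> \<zeta> b \<delta> (D - {d}) R)
                  + (\<Sum>r\<in>Rstar. Ustar - ds_value \<alpha> \<beta> h t f \<tau> \<zeta> b \<delta> D (R - {r})) \<noteq> 0"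
  shows "let b = (\<lambda>d. bbar d + \<epsilon>d d); \<delta> = (\<lambda>r. \<delta>bar r + \<epsilon>r r);
             Ustar = ds_value \<alpha> \<beta> h t f \<tau> \<zeta> b \<delta> D R;
             Dstar = {d\<in>D. \<exists>r\<in>R. x d r = 1}; Rstar = {r\<in>R. \<exists>d\<in>D. x d r = 1};
             \<Delta>Ud = (\<lambda>d. Ustar - ds_value \<alpha> \<beta> h t f \<tau> \<zeta> b \<delta> (D - {d}) R);
             \<Delta>Ur = (\<lambda>r. Ustar - ds_value \<alpha> \<beta> h t f \<tau> \<zeta> b \<delta> D (R - {r}));
             tot = (\<Sum>d\<in>Dstar. \<Delta>Ud d) + (\<Sum>r\<in>Rstar. \<Delta>Ur r);
             V = pairsum D R (sigma \<alpha> \<beta> h t f \<tau> D R b \<delta>) x;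
             Vbar = pairsum D R (sigma \<alpha> \<beta> h t f \<tau> D R bbar \<delta>bar) x;
             \<rho>d = (\<lambda>d. V * (\<Delta>Ud d / tot)); \<rho>r = (\<lambda>r. V * (\<Delta>Ur r / tot));
             qd = (\<lambda>d. (\<Sum>r\<in>R. x d r * Pd \<alpha> h t f \<tau> R (b d) d r) + \<rho>d d);
             qr = (\<lambda>r. (\<Sum>d\<in>D. x d r * Pr \<beta> h \<tau> D (\<delta> r) d r) - \<rho>r r);
             ud = (\<lambda>d. qd d - (\<Sum>r\<in>R. x d r * Pd \<alpha> h t f \<tau> R (bbar d) d r));
             ur = (\<lambda>r. (\<Sum>d\<in>D. x d r * Pr \<beta> h \<tau> D (\<delta>bar r) d r) - qr r)
         in (\<Sum>d\<in>Dstar. ud d) + (\<Sum>r\<in>Rstar. ur r) = Vbar"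
  using total_utility_eq_true_welfare[OF \<open>finite D\<close> \<open>finite R\<close> ds_optimal_zero_one[OF opt]]
    shares
  unfolding Let_def sigma_eq by simp

end
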